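(* Let $I$ be a proper ideal of a monoid $M$. Then $\mathfrak{L}(\mathrm{Val},\mathrm{CF},M)=\mathfrak{L}(\mathrm{Val},\mathrm{CF},M/I)$.
   Context: An ideal of a monoid $M$ is $I\subseteq M$ with $MIM\subseteq I$; it is proper if $I\ne M$. The Rees quotient $M/I$ is the quotient of $M$ by the congruence $a\sim b$ iff $a=b$ or $a,b\in I$; its elements are $I$ and the singletons $\{x\}$, $x\in M\setminus I$, with identity $\{1\}$. A context-free valence grammar over a monoid $N$ is $(V,T,P,S,N)$ with nonterminals $V$, terminals $T$, start symbol $S\in V$ and a finite set $P$ of rules $(A\to\alpha,n)$ with $A\in V$, $\alpha\in(V\cup T)^*$, $n\in N$. One step: $(w_1Aw_2,m)\Rightarrow(w_1\alpha w_2,mn)$ for a rule $(A\to\alpha,n)$. The generated language is $\{w\in T^*:(S,1)\Rightarrow^*(w,1)\}$. $\mathfrak{L}(\mathrm{Val},\mathrm{CF},N)$ is the family of languages generated by context-free valence grammars over $N$. *)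

theory Defs
  imports "HOL-Algebra.Group"
begin

definition monoid_ideal :: "('a, 'b) monoid_scheme \<Rightarrow> 'a set \<Rightarrow> bool" where
  "monoid_ideal M I \<longleftrightarrow> I \<subseteq> carrier M \<and>
     (\<forall>x\<in>carrier M. \<forall>i\<in>I. \<forall>y\<in>carrier M. x \<otimes>\<^bsub>M\<^esub> i \<otimes>\<^bsub>M\<^esub> y \<in> I)"

definition rees_class :: "'a set \<Rightarrow> 'a \<Rightarrow> 'a set" where
  "rees_class I x = (if x \<in> I then I else {x})"

text \<open>Multiplication of classes: multiply representatives (well defined since I is an ideal).\<close>
definition rees_quotient :: "('a, 'b) monoid_scheme \<Rightarrow> 'a set \<Rightarrow> 'a set monoid" where
  "rees_quotient M I =
     \<lparr> carrier = rees_class I ` carrier M,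
       mult = (\<lambda>A B. rees_class I
                 (SOME c. \<exists>a\<in>A. \<exists>b\<in>B. c = a \<otimes>\<^bsub>M\<^esub> b)),
       one = rees_class I \<one>\<^bsub>M\<^esub> \<rparr>"

text \<open>A grammar is (V, T, P, S); nonterminals are natural numbers, terminals of type 't.
  Sentential forms are lists over nat + 't (Inl = nonterminal, Inr = terminal).
  A rule is (A, alpha, n).\<close>

type_synonym ('t, 'm) valence_grammar =
  "nat set \<times> 't set \<times> (nat \<times> (nat + 't) list \<times> 'm) set \<times> nat"

definition valence_grammar ::
  "('m, 'b) monoid_scheme \<Rightarrow> ('t, 'm) valence_grammar \<Rightarrow> bool" where
  "valence_grammar N G = (case G of (V, T, P, S) \<Rightarrow>
      finite V \<and> finite T \<and> S \<in> V \<and> finite P \<and>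
      (\<forall>(A, \<alpha>, n) \<in> P. A \<in> V \<and> set \<alpha> \<subseteq> Inl ` V \<union> Inr ` T \<and> n \<in> carrier N))"

definition valence_step ::
  "('m, 'b) monoid_scheme \<Rightarrow> (nat \<times> (nat + 't) list \<times> 'm) set
     \<Rightarrow> (nat + 't) list \<times> 'm \<Rightarrow> (nat + 't) list \<times> 'm \<Rightarrow> bool" where
  "valence_step N P c c' \<longleftrightarrow>
     (\<exists>w1 A w2 \<alpha> n m. (A, \<alpha>, n) \<in> P \<and> c = (w1 @ Inl A # w2, m) \<and>
        c' = (w1 @ \<alpha> @ w2, m \<otimes>\<^bsub>N\<^esub> n))"

definition valence_lang ::
  "('m, 'b) monoid_scheme \<Rightarrow> ('t, 'm) valence_grammar \<Rightarrow> 't list set" where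
  "valence_lang N G = (case G of (V, T, P, S) \<Rightarrow>
      {w. set w \<subseteq> T \<and>
          (valence_step N P)\<^sup>*\<^sup>* ([Inl S], \<one>\<^bsub>N\<^esub>) (map Inr w, \<one>\<^bsub>N\<^esub>)})"

definition Val_CF :: "('m, 'b) monoid_scheme \<Rightarrow> 't list set set" where
  "Val_CF N = {L. \<exists>G. valence_grammar N G \<and> L = valence_lang N G}"

end

theory Submission
  imports Defs
begin

text \<open>The class map \<open>rees_class I\<close> is a monoid homomorphism onto \<open>M/I\<close>, and because the
  complement of \<open>I\<close> is closed under taking factors, a computation over \<open>M/I\<close> that ends in the
  class of \<open>\<one>\<close> (which is a singleton, as \<open>\<one> \<notin> I\<close>) never passes through the zero class \<open>I\<close>.
  Hence replacing each rule value \<open>n\<close> by its class, and conversely lifting each class to its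
  representatives outside \<open>I\<close>, preserves the generated language.\<close>

lemma monoid_ideal_mult_left:
  assumes "monoid M" "monoid_ideal M I" "x \<in> carrier M" "i \<in> I"
  shows "x \<otimes>\<^bsub>M\<^esub> i \<in> I"
proof -
  have "x \<otimes>\<^bsub>M\<^esub> i \<otimes>\<^bsub>M\<^esub> \<one>\<^bsub>M\<^esub> \<in> I"
    using assms unfolding monoid_ideal_def by blast
  moreover have "i \<in> carrier M" using assms(2,4) unfolding monoid_ideal_def by blast
  ultimately show ?thesis using assms(1,3) by (simp add: monoid.m_closed)
qed

lemma monoid_ideal_mult_right:
  assumes "monoid M" "monoid_ideal M I" "i \<in> I" "x \<in> carrier M"
  shows "i \<otimes>\<^bsub>M\<^esub> x \<in> I"
proof -
  have "\<one>\<^bsub>M\<^esub> \<otimes>\<^bsub>M\<^esub> i \<otimes>\<^bsub>M\<^esub> x \<in> I"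
    using assms unfolding monoid_ideal_def by blast
  moreover have "i \<in> carrier M" using assms(2,3) unfolding monoid_ideal_def by blast
  ultimately show ?thesis using assms(1) by simp
qed

lemma monoid_ideal_one_notin:
  assumes "monoid M" "monoid_ideal M I" "I \<noteq> carrier M"
  shows "\<one>\<^bsub>M\<^esub> \<notin> I"
proof
  assume "\<one>\<^bsub>M\<^esub> \<in> I"
  then have "carrier M \<subseteq> I"
    using monoid_ideal_mult_left[OF assms(1,2)] assms(1) by (metis monoid.r_one subsetI)
  then show False using assms(2,3) unfolding monoid_ideal_def by blast
qed

lemma monoid_ideal_mult_notin:
  assumes "monoid M" "monoid_ideal M I" "a \<in> carrier M" "b \<in> carrier M"
    and "a \<otimes>\<^bsub>M\<^esub> b \<notin> I"
  shows "a \<notin> I" "b \<notin> I"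
  using assms(5) monoid_ideal_mult_right[OF assms(1,2) _ assms(4)]
    monoid_ideal_mult_left[OF assms(1,2,3)] by blast+

lemma carrier_rees_quotient: "carrier (rees_quotient M I) = rees_class I ` carrier M"
  by (simp add: rees_quotient_def)

lemma one_rees_quotient: "\<one>\<^bsub>rees_quotient M I\<^esub> = rees_class I \<one>\<^bsub>M\<^esub>"
  by (simp add: rees_quotient_def)

lemma rees_class_eq_one:
  assumes "\<one>\<^bsub>M\<^esub> \<notin> I" "rees_class I m = rees_class I \<one>\<^bsub>M\<^esub>"
  shows "m = \<one>\<^bsub>M\<^esub>"
  using assms by (auto simp: rees_class_def split: if_splits)

lemma rees_class_mult:
  assumes "monoid M" "monoid_ideal M I" "a \<in> carrier M" "b \<in> carrier M"
  shows "rees_class I a \<otimes>\<^bsub>rees_quotient M I\<^esub> rees_class I b = rees_class I (a \<otimes>\<^bsub>M\<^esub> b)"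
proof (cases "a \<in> I \<or> b \<in> I")
  case False
  then show ?thesis by (simp add: rees_quotient_def rees_class_def)
next
  case True
  let ?c = "SOME c. \<exists>x\<in>rees_class I a. \<exists>y\<in>rees_class I b. c = x \<otimes>\<^bsub>M\<^esub> y"
  have "\<exists>c. \<exists>x\<in>rees_class I a. \<exists>y\<in>rees_class I b. c = x \<otimes>\<^bsub>M\<^esub> y"
    by (auto simp: rees_class_def)
  from someI_ex[OF this] obtain x y where xy: "x \<in> rees_class I a" "y \<in> rees_class I b" "?c = x \<otimes>\<^bsub>M\<^esub> y"
    by blast
  have "I \<subseteq> carrier M" using assms(2) unfolding monoid_ideal_def by blast
  then have "x \<in> carrier M" "y \<in> carrier M"
    using xy(1,2) assms(3,4) by (auto simp: rees_class_def split: if_splits)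
  then have "?c \<in> I"
    using True xy monoid_ideal_mult_left[OF assms(1,2)] monoid_ideal_mult_right[OF assms(1,2)]
    by (auto simp: rees_class_def)
  moreover have "a \<otimes>\<^bsub>M\<^esub> b \<in> I"
    using True monoid_ideal_mult_notin[OF assms] by blast
  ultimately show ?thesis by (simp add: rees_quotient_def rees_class_def)
qed

lemma valence_steps_map:
  assumes "monoid M"
    and hom: "\<And>a b. a \<in> carrier M \<Longrightarrow> b \<in> carrier M \<Longrightarrow> h (a \<otimes>\<^bsub>M\<^esub> b) = h a \<otimes>\<^bsub>N\<^esub> h b"
    and rules: "\<And>A \<alpha> n. (A, \<alpha>, n) \<in> P \<Longrightarrow> n \<in> carrier M \<and> (A, \<alpha>, h n) \<in> P'"
    and "(valence_step M P)\<^sup>*\<^sup>* (s0, m0) (s, m)"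
    and "m0 \<in> carrier M"
  shows "(valence_step N P')\<^sup>*\<^sup>* (s0, h m0) (s, h m) \<and> m \<in> carrier M"
  using assms(4)
proof (induction rule: rtranclp_induct2)
  case refl
  then show ?case using assms(5) by simp
next
  case (step s1 m1 s m)
  then have IH: "(valence_step N P')\<^sup>*\<^sup>* (s0, h m0) (s1, h m1)" "m1 \<in> carrier M" by auto
  from step.hyps(2) obtain w1 A w2 \<alpha> n where r: "(A, \<alpha>, n) \<in> P" "s1 = w1 @ Inl A # w2"
    "s = w1 @ \<alpha> @ w2" "m = m1 \<otimes>\<^bsub>M\<^esub> n"
    unfolding valence_step_def by blast
  have n: "n \<in> carrier M" "(A, \<alpha>, h n) \<in> P'" using rules[OF r(1)] by auto
  have "valence_step N P' (s1, h m1) (s, h m)"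
    unfolding valence_step_def using r n hom[OF IH(2) n(1)] by blast
  then show ?case using IH n r assms(1) by (auto simp: monoid.m_closed)
qed

text \<open>A value outside \<open>I\<close> is only reached through values and rule values outside \<open>I\<close>,
  so such derivations lift back to \<open>M\<close>.\<close>

lemma valence_steps_lift:
  assumes "monoid M" "monoid_ideal M I"
    and hom: "\<And>a b. a \<in> carrier M \<Longrightarrow> b \<in> carrier M \<Longrightarrow> h (a \<otimes>\<^bsub>M\<^esub> b) = h a \<otimes>\<^bsub>N\<^esub> h b"
    and rules: "\<And>A \<alpha> k. (A, \<alpha>, k) \<in> P' \<Longrightarrow>
                  \<exists>n\<in>carrier M. k = h n \<and> (n \<notin> I \<longrightarrow> (A, \<alpha>, n) \<in> P)"
    and "(valence_step N P')\<^sup>*\<^sup>* (s0, h m0) (s, c)"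
    and "m0 \<in> carrier M"
  shows "\<exists>m\<in>carrier M. c = h m \<and> (m \<notin> I \<longrightarrow> (valence_step M P)\<^sup>*\<^sup>* (s0, m0) (s, m))"
  using assms(5)
proof (induction rule: rtranclp_induct2)
  case refl
  then show ?case using assms(6) by auto
next
  case (step s1 c1 s c)
  then obtain m1 where IH: "m1 \<in> carrier M" "c1 = h m1"
    "m1 \<notin> I \<longrightarrow> (valence_step M P)\<^sup>*\<^sup>* (s0, m0) (s1, m1)" by auto
  from step.hyps(2) obtain w1 A w2 \<alpha> k where r: "(A, \<alpha>, k) \<in> P'" "s1 = w1 @ Inl A # w2"
    "s = w1 @ \<alpha> @ w2" "c = c1 \<otimes>\<^bsub>N\<^esub> k"
    unfolding valence_step_def by blast
  obtain n where n: "n \<in> carrier M" "k = h n" "n \<notin> I \<longrightarrow> (A, \<alpha>, n) \<in> P"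
    using rules[OF r(1)] by blast
  have "(valence_step M P)\<^sup>*\<^sup>* (s0, m0) (s, m1 \<otimes>\<^bsub>M\<^esub> n)" if "m1 \<otimes>\<^bsub>M\<^esub> n \<notin> I"
  proof -
    have "m1 \<notin> I" "n \<notin> I" using monoid_ideal_mult_notin[OF assms(1,2) IH(1) n(1) that] by auto
    then have "valence_step M P (s1, m1) (s, m1 \<otimes>\<^bsub>M\<^esub> n)"
      unfolding valence_step_def using r n by blast
    with IH(3) \<open>m1 \<notin> I\<close> show ?thesis by (meson rtranclp.rtrancl_into_rtrancl)
  qed
  moreover have "c = h (m1 \<otimes>\<^bsub>M\<^esub> n)" using hom[OF IH(1) n(1)] r(4) IH(2) n(2) by simp
  ultimately show ?case using IH(1) n(1) assms(1) by (auto simp: monoid.m_closed)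
qed

definition rees_related_rules ::
  "('a, 'b) monoid_scheme \<Rightarrow> 'a set \<Rightarrow> (nat \<times> (nat + 't) list \<times> 'a) set
     \<Rightarrow> (nat \<times> (nat + 't) list \<times> 'a set) set \<Rightarrow> bool" where
  "rees_related_rules M I P P' \<longleftrightarrow>
     (\<forall>A \<alpha> n. (A, \<alpha>, n) \<in> P \<longrightarrow> n \<in> carrier M \<and> (A, \<alpha>, rees_class I n) \<in> P') \<and>
     (\<forall>A \<alpha> k. (A, \<alpha>, k) \<in> P' \<longrightarrow>
        (\<exists>n\<in>carrier M. k = rees_class I n \<and> (n \<notin> I \<longrightarrow> (A, \<alpha>, n) \<in> P)))"

lemma valence_lang_rees_quotient:
  fixes P :: "(nat \<times> (nat + 't) list \<times> 'a) set"
  assumes "monoid M" "monoid_ideal M I" "I \<noteq> carrier M" "rees_related_rules M I P P'"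
  shows "valence_lang M (V, T, P, S) = valence_lang (rees_quotient M I) (V, T, P', S)"
proof -
  let ?Q = "rees_quotient M I" and ?h = "rees_class I"
  have one_notin: "\<one>\<^bsub>M\<^esub> \<notin> I" using monoid_ideal_one_notin[OF assms(1-3)] .
  have one_closed: "\<one>\<^bsub>M\<^esub> \<in> carrier M" using assms(1) by simp
  have hom: "\<And>a b. a \<in> carrier M \<Longrightarrow> b \<in> carrier M \<Longrightarrow> ?h (a \<otimes>\<^bsub>M\<^esub> b) = ?h a \<otimes>\<^bsub>?Q\<^esub> ?h b"
    using rees_class_mult[OF assms(1,2)] by simp
  have map_rules: "\<And>A \<alpha> n. (A, \<alpha>, n) \<in> P \<Longrightarrow> n \<in> carrier M \<and> (A, \<alpha>, ?h n) \<in> P'"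
    and lift_rules: "\<And>A \<alpha> k. (A, \<alpha>, k) \<in> P' \<Longrightarrow>
                       \<exists>n\<in>carrier M. k = ?h n \<and> (n \<notin> I \<longrightarrow> (A, \<alpha>, n) \<in> P)"
    using assms(4) unfolding rees_related_rules_def by blast+
  have "(valence_step M P)\<^sup>*\<^sup>* ([Inl S], \<one>\<^bsub>M\<^esub>) (map Inr w, \<one>\<^bsub>M\<^esub>) \<longleftrightarrow>
        (valence_step ?Q P')\<^sup>*\<^sup>* ([Inl S], ?h \<one>\<^bsub>M\<^esub>) (map Inr w, ?h \<one>\<^bsub>M\<^esub>)" for w :: "'t list"
  proof
    assume "(valence_step M P)\<^sup>*\<^sup>* ([Inl S], \<one>\<^bsub>M\<^esub>) (map Inr w, \<one>\<^bsub>M\<^esub>)"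
    from valence_steps_map[OF assms(1) hom map_rules this one_closed]
    show "(valence_step ?Q P')\<^sup>*\<^sup>* ([Inl S], ?h \<one>\<^bsub>M\<^esub>) (map Inr w, ?h \<one>\<^bsub>M\<^esub>)"
      by blast
  next
    assume "(valence_step ?Q P')\<^sup>*\<^sup>* ([Inl S], ?h \<one>\<^bsub>M\<^esub>) (map Inr w, ?h \<one>\<^bsub>M\<^esub>)"
    from valence_steps_lift[OF assms(1,2) hom lift_rules this one_closed]
    obtain m where "?h \<one>\<^bsub>M\<^esub> = ?h m"
        "m \<notin> I \<longrightarrow> (valence_step M P)\<^sup>*\<^sup>* ([Inl S], \<one>\<^bsub>M\<^esub>) (map Inr w, m)"
      by blast
    moreover from this(1) have "m = \<one>\<^bsub>M\<^esub>" using rees_class_eq_one[OF one_notin] by metis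
    ultimately show "(valence_step M P)\<^sup>*\<^sup>* ([Inl S], \<one>\<^bsub>M\<^esub>) (map Inr w, \<one>\<^bsub>M\<^esub>)"
      using one_notin by simp
  qed
  then show ?thesis by (simp add: valence_lang_def one_rees_quotient)
qed

lemma valence_grammar_rule_carrier:
  assumes "valence_grammar N (V, T, P, S)" "(A, \<alpha>, n) \<in> P"
  shows "n \<in> carrier N"
  using assms unfolding valence_grammar_def by auto

lemma valence_grammar_rees_image:
  fixes P :: "(nat \<times> (nat + 't) list \<times> 'a) set" and I :: "'a set"
  assumes "valence_grammar M (V, T, P, S)"
  obtains P' where "valence_grammar (rees_quotient M I) (V, T, P', S)" "rees_related_rules M I P P'"
proof
  let ?P' = "(\<lambda>(A, \<alpha>, n). (A, \<alpha>, rees_class I n)) ` P"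
  show "valence_grammar (rees_quotient M I) (V, T, ?P', S)"
    using assms unfolding valence_grammar_def carrier_rees_quotient by fastforce
  have "\<exists>n\<in>carrier M. k = rees_class I n \<and> (n \<notin> I \<longrightarrow> (A, \<alpha>, n) \<in> P)"
    if "(A, \<alpha>, k) \<in> ?P'" for A \<alpha> k
    using that valence_grammar_rule_carrier[OF assms] by fast
  then show "rees_related_rules M I P ?P'"
    using valence_grammar_rule_carrier[OF assms] unfolding rees_related_rules_def by force
qed

text \<open>Rules with value in \<open>I\<close> can be dropped: no successful derivation uses them.\<close>

lemma valence_grammar_rees_preimage:
  fixes P' :: "(nat \<times> (nat + 't) list \<times> 'a set) set" and I :: "'a set"
  assumes "valence_grammar (rees_quotient M I) (V, T, P', S)"
  obtains P where "valence_grammar M (V, T, P, S)" "rees_related_rules M I P P'"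
proof -
  define P where "P = {(A, \<alpha>, n). n \<in> carrier M \<and> n \<notin> I \<and> (A, \<alpha>, rees_class I n) \<in> P'}"
  have "P \<subseteq> (\<lambda>(A, \<alpha>, k). (A, \<alpha>, the_elem k)) ` P'"
  proof
    fix r assume "r \<in> P"
    then obtain A \<alpha> n where "r = (A, \<alpha>, n)" "n \<notin> I" "(A, \<alpha>, rees_class I n) \<in> P'"
      unfolding P_def by blast
    then show "r \<in> (\<lambda>(A, \<alpha>, k). (A, \<alpha>, the_elem k)) ` P'"
      by (force simp: rees_class_def intro: rev_image_eqI)
  qed
  with finite_surj have "finite P"
    using assms(1) unfolding valence_grammar_def by blast
  then have "valence_grammar M (V, T, P, S)"
    using assms(1) unfolding valence_grammar_def P_def by fastforce
  moreover have "rees_related_rules M I P P'"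
    using assms(1) unfolding valence_grammar_def rees_related_rules_def P_def carrier_rees_quotient
    by fastforce
  ultimately show thesis by (rule that)
qed

theorem proposition3:
  fixes M :: "'a monoid" and I :: "'a set"
  assumes "monoid M"
    and "monoid_ideal M I"
    and "I \<noteq> carrier M"
  shows "(Val_CF M :: 't list set set) = Val_CF (rees_quotient M I)"
proof (intro equalityI subsetI)
  fix L :: "'t list set" assume "L \<in> Val_CF M"
  then obtain V T P S where G: "valence_grammar M (V, T, P, S)" "L = valence_lang M (V, T, P, S)"
    unfolding Val_CF_def by force
  obtain P' where "valence_grammar (rees_quotient M I) (V, T, P', S)" "rees_related_rules M I P P'"
    using valence_grammar_rees_image[OF G(1)] .
  with G(2) show "L \<in> Val_CF (rees_quotient M I)"
    using valence_lang_rees_quotient[OF assms] unfolding Val_CF_def by blast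
next
  fix L :: "'t list set" assume "L \<in> Val_CF (rees_quotient M I)"
  then obtain V T P' S where G: "valence_grammar (rees_quotient M I) (V, T, P', S)"
      "L = valence_lang (rees_quotient M I) (V, T, P', S)"
    unfolding Val_CF_def by force
  obtain P where "valence_grammar M (V, T, P, S)" "rees_related_rules M I P P'"
    using valence_grammar_rees_preimage[OF G(1)] .
  with G(2) show "L \<in> Val_CF M"
    using valence_lang_rees_quotient[OF assms] unfolding Val_CF_def by blast
qed

end
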